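(* Let $K$ be a field of characteristic $p>0$ and $A^*$ a graded Hopf algebra over $K$ with a decreasing filtration satisfying (E1), (E2), (E3), (E4), (E6), (E7), (E8), and let $M^*$ be an unstable $A^*$-module. Then: (1) $\Sigma^{-1}\operatorname{Coker}\lambda_{M^*}$ is an unstable $A^*$-module; (2) if moreover the filtration satisfies (E9), then $\Sigma^{-1}\operatorname{Ker}\lambda_{M^*}$ is an unstable $A^*$-module.
   Context: Let $A^*$ be a graded Hopf algebra over a field $K$ of characteristic $p$, with product $\mu$ and a decreasing filtration $(F_iA^* )_{i\in\mathbb Z}$ by graded subspaces; $E_i^jA^*=(F_iA^* )^j/(F_{i+1}A^* )^j$. A left $A^*$-module $M^*$ with structure map $\alpha$ is unstable if $\alpha(F_{n+1}A^*\otimes M^n)=0$ for all $n$; then $\alpha$ induces $\bar\alpha_{M,n}\colon A^*/F_{n+1}A^*\otimes M^n\to M^*$. $(\Sigma^nV^* )^i=V^{i-n}$. Conditions: (E1) $F_iA^*=A^*$ for $i\le0$; (E2) $\bigcap_iF_iA^*=0$; (E3) each $F_iA^*$ is a left ideal; (E4) $\mu(F_iA^*\otimes A^j)\subset F_{i-j}A^*$; (E6) $E_{2i+\varepsilon}^kA^*=0$ if $k<2i(p-1)+\varepsilon$ or $2i+\varepsilon+k\not\equiv0,2\pmod{2p}$ ($i,k\in\mathbb Z$, $\varepsilon\in\{0,1\}$); (E7) $\dim E_{2i+\varepsilon}^{2i(p-1)+\varepsilon}A^*=1$ for $i\ge0$; (E8) for $i,j\ge0$, $\varepsilon\in\{0,1\}$,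 the map $\tilde\mu_{2i+\varepsilon}^{2i(p-1)+\varepsilon,j}\colon E_{2i+\varepsilon}^{2i(p-1)+\varepsilon}A^*\otimes(A^*/F_{2i-j+\varepsilon+1}A^* )^j\to E_{2i-j+\varepsilon}^{2i(p-1)+j+\varepsilon}A^*$, $[a]\otimes[b]\mapsto[ab]$, is an isomorphism. For $i,j\ge0$, $\varepsilon\in\{0,1\}$ put $\kappa=\varepsilon$ if $j$ is even and $\kappa=1-\varepsilon$ if $j$ is odd, and let $\gamma_{i,j,\varepsilon}$ be the composite of the map $A^{pj-(p-2)(\varepsilon-\kappa)}\otimes E_{2i-j+\varepsilon}^{(2i-j+\varepsilon-\kappa)(p-1)+\kappa}A^*\to E_{2i-j+\varepsilon}^{2i(p-1)+j+\varepsilon}A^*$ induced by left multiplication with $(\tilde\mu_{2i+\varepsilon}^{2i(p-1)+\varepsilon,j})^{-1}$. (E9): for every $k$, $\gamma_{i,j,\varepsilon}$ maps $(F_kA^* )^{pj-(p-2)(\varepsilon-\kappa)}\otimes E_{2i-j+\varepsilon}^{(2i-j+\varepsilon-\kappa)(p-1)+\kappa}A^*$ into $E_{2i+\varepsilon}^{2i(p-1)+\varepsilon}A^*\otimes(F_{\lceil k/p\rceil}A^*/F_{2i-j+\varepsilon+1}A^* )^j$. The module $\Phi M^*$: as a graded vector space $(\Phi M^* )^{2ip+2\varepsilon}=E_{2i+\varepsilon}^{2i(p-1)+\varepsilon}A^*\otimes M^{2i+\varepsilon}$ and $(\Phi M^* )^k=0$ for $k\not\equiv0,2\pmod{2p}$;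 the $A^*$-action is given on homogeneous pieces by: $A^{2jp}\otimes E_{2i+\varepsilon}^{2i(p-1)+\varepsilon}A^*\otimes M^{2i+\varepsilon}\to E_{2(i+j)+\varepsilon}^{2(i+j)(p-1)+\varepsilon}A^*\otimes M^{2(i+j)+\varepsilon}$ equal to $(1\otimes\bar\alpha_{M,2i+\varepsilon})\circ(\gamma_{i+j,2j,\varepsilon}\otimes1)$; $A^{2jp+2}\otimes E_{2i}^{2i(p-1)}A^*\otimes M^{2i}\to E_{2(i+j)+1}^{2(i+j)(p-1)+1}A^*\otimes M^{2(i+j)+1}$ equal to $(1\otimes\bar\alpha_{M,2i})\circ(\gamma_{i+j,2j+1,1}\otimes1)$; $A^{2jp-2}\otimes E_{2i+1}^{2i(p-1)+1}A^*\otimes M^{2i+1}\to E_{2(i+j)}^{2(i+j)(p-1)}A^*\otimes M^{2(i+j)}$ equal to $(1\otimes\bar\alpha_{M,2i+1})\circ(\gamma_{i+j,2j-1,0}\otimes1)$; all other components are zero. $\lambda_M\colon\Phi M^*\to M^*$ is given by $[a]\otimes x\mapsto ax$ on $E_{2i+\varepsilon}^{2i(p-1)+\varepsilon}A^*\otimes M^{2i+\varepsilon}$; it is a homomorphism of $A^*$-modules, so its kernel and cokernel are $A^*$-modules. *)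

theory Defs
  imports Complex_Main "HOL-Computational_Algebra.Primes"
begin

text \<open>A graded vector space over the field 'k is given by its homogeneous components
  V n (n :: int), which are subspaces of an ambient K-vector space whose sum is direct.\<close>

definition graded_vs :: "('k::field \<Rightarrow> 'v::ab_group_add \<Rightarrow> 'v) \<Rightarrow> (int \<Rightarrow> 'v set) \<Rightarrow> bool" where
  "graded_vs sc V \<longleftrightarrow> vector_space sc \<and> (\<forall>n. module.subspace sc (V n)) \<and>
     (\<forall>S f. finite S \<longrightarrow> (\<forall>n\<in>S. f n \<in> V n) \<longrightarrow> sum f S = 0 \<longrightarrow> (\<forall>n\<in>S. f n = 0))"

text \<open>Graded (associative, unital) K-algebra A with product (*), components Ad, together with a
  decreasing filtration by graded subspaces: F i j = (F_i A)^j.\<close>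

definition filtered_graded_algebra ::
  "('k::field \<Rightarrow> 'a::ring_1 \<Rightarrow> 'a) \<Rightarrow> (int \<Rightarrow> 'a set) \<Rightarrow> (int \<Rightarrow> int \<Rightarrow> 'a set) \<Rightarrow> bool" where
  "filtered_graded_algebra sc Ad F \<longleftrightarrow>
     graded_vs sc Ad \<and>
     (\<forall>t a b. sc t (a * b) = sc t a * b \<and> a * sc t b = sc t (a * b)) \<and>
     1 \<in> Ad 0 \<and>
     (\<forall>i j a b. a \<in> Ad i \<longrightarrow> b \<in> Ad j \<longrightarrow> a * b \<in> Ad (i + j)) \<and>
     (\<forall>i j. module.subspace sc (F i j) \<and> F i j \<subseteq> Ad j \<and> F (i + 1) j \<subseteq> F i j)"

definition E1 :: "(int \<Rightarrow> 'a set) \<Rightarrow> (int \<Rightarrow> int \<Rightarrow> 'a set) \<Rightarrow> bool" where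
  "E1 Ad F \<longleftrightarrow> (\<forall>i j. i \<le> 0 \<longrightarrow> F i j = Ad j)"

definition E2 :: "(int \<Rightarrow> int \<Rightarrow> 'a::zero set) \<Rightarrow> bool" where
  "E2 F \<longleftrightarrow> (\<forall>j. (\<Inter>i. F i j) = {0})"

definition E3 :: "(int \<Rightarrow> 'a::times set) \<Rightarrow> (int \<Rightarrow> int \<Rightarrow> 'a set) \<Rightarrow> bool" where
  "E3 Ad F \<longleftrightarrow> (\<forall>i j k a b. a \<in> Ad k \<longrightarrow> b \<in> F i j \<longrightarrow> a * b \<in> F i (k + j))"

definition E4 :: "(int \<Rightarrow> 'a::times set) \<Rightarrow> (int \<Rightarrow> int \<Rightarrow> 'a set) \<Rightarrow> bool" where
  "E4 Ad F \<longleftrightarrow> (\<forall>i j k a b. a \<in> F i k \<longrightarrow> b \<in> Ad j \<longrightarrow> a * b \<in> F (i - j) (k + j))"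

text \<open>E_i^k A = 0 means (F_i A)^k \<subseteq> (F_{i+1} A)^k.\<close>

definition E6 :: "nat \<Rightarrow> (int \<Rightarrow> int \<Rightarrow> 'a set) \<Rightarrow> bool" where
  "E6 p F \<longleftrightarrow> (\<forall>i k \<epsilon>::int. \<epsilon> \<in> {0, 1} \<longrightarrow>
      (k < 2 * i * (int p - 1) + \<epsilon> \<or> (2 * i + \<epsilon> + k) mod (2 * int p) \<notin> {0, 2}) \<longrightarrow>
      F (2 * i + \<epsilon>) k \<subseteq> F (2 * i + \<epsilon> + 1) k)"

text \<open>The degree 2i(p-1)+\<epsilon> of the distinguished one-dimensional piece.\<close>

definition gdeg :: "nat \<Rightarrow> int \<Rightarrow> int \<Rightarrow> int" where
  "gdeg p i \<epsilon> = 2 * i * (int p - 1) + \<epsilon>"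

text \<open>(E7): dim E_{2i+\<epsilon>}^{2i(p-1)+\<epsilon>} A = 1, written out for the quotient
  F_{2i+\<epsilon>}/F_{2i+\<epsilon>+1} in that degree: it has an element with nonzero class, and
  every class is a scalar multiple of it.\<close>

definition E7 :: "('k::field \<Rightarrow> 'a::ab_group_add \<Rightarrow> 'a) \<Rightarrow> nat \<Rightarrow> (int \<Rightarrow> int \<Rightarrow> 'a set) \<Rightarrow> bool" where
  "E7 sc p F \<longleftrightarrow> (\<forall>i \<epsilon>::int. 0 \<le> i \<longrightarrow> \<epsilon> \<in> {0, 1} \<longrightarrow>
      (\<exists>a \<in> F (2 * i + \<epsilon>) (gdeg p i \<epsilon>). a \<notin> F (2 * i + \<epsilon> + 1) (gdeg p i \<epsilon>) \<and>
         (\<forall>c \<in> F (2 * i + \<epsilon>) (gdeg p i \<epsilon>). \<exists>t. c - sc t a \<in> F (2 * i + \<epsilon> + 1) (gdeg p i \<epsilon>))))"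

text \<open>(E8): the map E_{2i+\<epsilon>}^{2i(p-1)+\<epsilon>} \<otimes> (A/F_{2i-j+\<epsilon>+1})^j \<rightarrow> E_{2i-j+\<epsilon>}^{2i(p-1)+j+\<epsilon>},
  [a]\<otimes>[b] \<mapsto> [ab], is an isomorphism. Since the first factor is one-dimensional (E7), this
  says: for a representative a of a nonzero class, [b] \<mapsto> [ab] is bijective
  (A/F_{2i-j+\<epsilon>+1})^j \<rightarrow> E_{2i-j+\<epsilon>}^{2i(p-1)+j+\<epsilon>} (it is well defined and linear by (E3)).\<close>

definition E8 :: "nat \<Rightarrow> (int \<Rightarrow> 'a::ring set) \<Rightarrow> (int \<Rightarrow> int \<Rightarrow> 'a set) \<Rightarrow> bool" where
  "E8 p Ad F \<longleftrightarrow> (\<forall>i j \<epsilon>::int. 0 \<le> i \<longrightarrow> 0 \<le> j \<longrightarrow> \<epsilon> \<in> {0, 1} \<longrightarrow>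
      (\<forall>a \<in> F (2 * i + \<epsilon>) (gdeg p i \<epsilon>). a \<notin> F (2 * i + \<epsilon> + 1) (gdeg p i \<epsilon>) \<longrightarrow>
        (\<forall>b \<in> Ad j. a * b \<in> F (2 * i - j + \<epsilon> + 1) (gdeg p i \<epsilon> + j) \<longrightarrow> b \<in> F (2 * i - j + \<epsilon> + 1) j) \<and>
        (\<forall>c \<in> F (2 * i - j + \<epsilon>) (gdeg p i \<epsilon> + j).
           \<exists>b \<in> Ad j. c - a * b \<in> F (2 * i - j + \<epsilon> + 1) (gdeg p i \<epsilon> + j))))"

text \<open>(E9): \<gamma>_{i,j,\<epsilon>}(a \<otimes> [c]) = [u] \<otimes> [b] where ac \<equiv> ub mod F_{2i-j+\<epsilon>+1} (u a representative of
  a basis of E_{2i+\<epsilon>}^{2i(p-1)+\<epsilon>}); the condition is that [b] lies in the image of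
  F_{\<lceil>k/p\<rceil>}A in (A/F_{2i-j+\<epsilon>+1})^j whenever a \<in> F_k A.\<close>

definition kappa :: "int \<Rightarrow> int \<Rightarrow> int" where
  "kappa j \<epsilon> = (if even j then \<epsilon> else 1 - \<epsilon>)"

definition E9 :: "nat \<Rightarrow> (int \<Rightarrow> 'a::ring set) \<Rightarrow> (int \<Rightarrow> int \<Rightarrow> 'a set) \<Rightarrow> bool" where
  "E9 p Ad F \<longleftrightarrow> (\<forall>i j \<epsilon> k::int. 0 \<le> i \<longrightarrow> 0 \<le> j \<longrightarrow> \<epsilon> \<in> {0, 1} \<longrightarrow>
      (let \<kappa> = kappa j \<epsilon>;
           d1 = int p * j - (int p - 2) * (\<epsilon> - \<kappa>);
           d2 = (2 * i - j + \<epsilon> - \<kappa>) * (int p - 1) + \<kappa>;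
           m = 2 * i - j + \<epsilon> + 1
       in \<forall>a \<in> F k d1. \<forall>c \<in> F (m - 1) d2.
            \<forall>u \<in> F (2 * i + \<epsilon>) (gdeg p i \<epsilon>). u \<notin> F (2 * i + \<epsilon> + 1) (gdeg p i \<epsilon>) \<longrightarrow>
            (\<forall>b \<in> Ad j. a * c - u * b \<in> F m (gdeg p i \<epsilon> + j) \<longrightarrow>
               (\<exists>b' \<in> F \<lceil>real_of_int k / real p\<rceil> j. b - b' \<in> F m j))))"

definition graded_module ::
  "('k::field \<Rightarrow> 'a::ring_1 \<Rightarrow> 'a) \<Rightarrow> ('k \<Rightarrow> 'm::ab_group_add \<Rightarrow> 'm) \<Rightarrow> (int \<Rightarrow> 'a set) \<Rightarrow>
   (int \<Rightarrow> 'm set) \<Rightarrow> ('a \<Rightarrow> 'm \<Rightarrow> 'm) \<Rightarrow> bool" where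
  "graded_module scA scM Ad Md act \<longleftrightarrow>
     graded_vs scM Md \<and>
     (\<forall>a b x. act (a + b) x = act a x + act b x) \<and>
     (\<forall>a x y. act a (x + y) = act a x + act a y) \<and>
     (\<forall>t a x. act (scA t a) x = scM t (act a x) \<and> act a (scM t x) = scM t (act a x)) \<and>
     (\<forall>x. act 1 x = x) \<and>
     (\<forall>a b x. act (a * b) x = act a (act b x)) \<and>
     (\<forall>i n a x. a \<in> Ad i \<longrightarrow> x \<in> Md n \<longrightarrow> act a x \<in> Md (i + n))"

text \<open>Unstable module, for a graded module given by components N, degree-wise zero z and
  homogeneous action actN k n : A^k \<times> N^n \<rightarrow> N^{k+n}:
  \<alpha>(F_{n+1}A \<otimes> N^n) = 0.\<close>

definition unstable :: "(int \<Rightarrow> int \<Rightarrow> 'a set) \<Rightarrow> (int \<Rightarrow> 'n set) \<Rightarrow> (int \<Rightarrow> 'n) \<Rightarrow>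
    (int \<Rightarrow> int \<Rightarrow> 'a \<Rightarrow> 'n \<Rightarrow> 'n) \<Rightarrow> bool" where
  "unstable F N z actN \<longleftrightarrow> (\<forall>n k a x. a \<in> F (n + 1) k \<longrightarrow> x \<in> N n \<longrightarrow> actN k n a x = z (k + n))"

text \<open>Desuspension \<Sigma>^{-1}: (\<Sigma>^{-1}N)^d = N^{d+1}.  (Any sign convention for the action
  does not affect unstability; we use none.)\<close>

definition desusp_sp :: "(int \<Rightarrow> 'n set) \<Rightarrow> int \<Rightarrow> 'n set" where
  "desusp_sp N d = N (d + 1)"

definition desusp_zero :: "(int \<Rightarrow> 'n) \<Rightarrow> int \<Rightarrow> 'n" where
  "desusp_zero z d = z (d + 1)"

definition desusp_act :: "(int \<Rightarrow> int \<Rightarrow> 'a \<Rightarrow> 'n \<Rightarrow> 'n) \<Rightarrow> int \<Rightarrow> int \<Rightarrow> 'a \<Rightarrow> 'n \<Rightarrow> 'n" where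
  "desusp_act actN k d a x = actN k (d + 1) a x"

section \<open>The module \<Phi>M and the map \<lambda>_M\<close>

text \<open>We fix, for i \<ge> 0 and \<epsilon> \<in> {0,1}, a representative u i \<epsilon> \<in> (F_{2i+\<epsilon>}A)^{2i(p-1)+\<epsilon>} of a
  basis vector of the one-dimensional space E_{2i+\<epsilon>}^{2i(p-1)+\<epsilon>}A, and identify
  E_{2i+\<epsilon>}^{2i(p-1)+\<epsilon>}A \<otimes> M^{2i+\<epsilon>} with M^{2i+\<epsilon>} via [u i \<epsilon>] \<otimes> x \<leftrightarrow> x.\<close>

definition gen_family :: "nat \<Rightarrow> (int \<Rightarrow> int \<Rightarrow> 'a set) \<Rightarrow> (int \<Rightarrow> int \<Rightarrow> 'a) \<Rightarrow> bool" where
  "gen_family p F u \<longleftrightarrow> (\<forall>i \<epsilon>::int. 0 \<le> i \<longrightarrow> \<epsilon> \<in> {0, 1} \<longrightarrow>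
      u i \<epsilon> \<in> F (2 * i + \<epsilon>) (gdeg p i \<epsilon>) \<and> u i \<epsilon> \<notin> F (2 * i + \<epsilon> + 1) (gdeg p i \<epsilon>))"

text \<open>Degree d = 2ip + 2\<epsilon> (i \<ge> 0, \<epsilon> \<in> {0,1}) is valid; then i = d div 2p, \<epsilon> = (d mod 2p) div 2.\<close>

definition phi_valid :: "nat \<Rightarrow> int \<Rightarrow> bool" where
  "phi_valid p d \<longleftrightarrow> 0 \<le> d \<and> d mod (2 * int p) \<in> {0, 2}"

definition phi_i :: "nat \<Rightarrow> int \<Rightarrow> int" where
  "phi_i p d = d div (2 * int p)"

definition phi_e :: "nat \<Rightarrow> int \<Rightarrow> int" where
  "phi_e p d = (d mod (2 * int p)) div 2"

definition PhiM :: "nat \<Rightarrow> (int \<Rightarrow> 'm::zero set) \<Rightarrow> int \<Rightarrow> 'm set" where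
  "PhiM p Md d = (if phi_valid p d then Md (2 * phi_i p d + phi_e p d) else {0})"

definition lam :: "nat \<Rightarrow> (int \<Rightarrow> int \<Rightarrow> 'a) \<Rightarrow> ('a \<Rightarrow> 'm::zero \<Rightarrow> 'm) \<Rightarrow> int \<Rightarrow> 'm \<Rightarrow> 'm" where
  "lam p u act d x = (if phi_valid p d then act (u (phi_i p d) (phi_e p d)) x else 0)"

text \<open>For a \<in> A^k and [u i \<epsilon>]\<otimes>x of degree d = 2ip+2\<epsilon>:
  \<gamma>(a \<otimes> [u i \<epsilon>]) = [u (i+j) \<epsilon>'] \<otimes> [b] where a\<cdot>u i \<epsilon> \<equiv> u (i+j) \<epsilon>' \<cdot> b mod F_{2i+\<epsilon>+1}, and the
  result is [u (i+j) \<epsilon>'] \<otimes> b x.\<close>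

definition phi_act :: "nat \<Rightarrow> (int \<Rightarrow> 'a::ring set) \<Rightarrow> (int \<Rightarrow> int \<Rightarrow> 'a set) \<Rightarrow> (int \<Rightarrow> int \<Rightarrow> 'a) \<Rightarrow>
    ('a \<Rightarrow> 'm::zero \<Rightarrow> 'm) \<Rightarrow> int \<Rightarrow> int \<Rightarrow> 'a \<Rightarrow> 'm \<Rightarrow> 'm" where
  "phi_act p Ad F u act k d a x =
     (let i = phi_i p d; \<epsilon> = phi_e p d; D = k + gdeg p i \<epsilon>; P = 2 * int p in
      if \<not> phi_valid p d then 0
      else if 0 \<le> k \<and> k mod P = 0 then
        (let j = k div P in
         act (SOME b. b \<in> Ad (2 * j) \<and> a * u i \<epsilon> - u (i + j) \<epsilon> * b \<in> F (2 * i + \<epsilon> + 1) D) x)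
      else if \<epsilon> = 0 \<and> 2 \<le> k \<and> (k - 2) mod P = 0 then
        (let j = (k - 2) div P in
         act (SOME b. b \<in> Ad (2 * j + 1) \<and> a * u i 0 - u (i + j) 1 * b \<in> F (2 * i + 1) D) x)
      else if \<epsilon> = 1 \<and> P \<le> k + 2 \<and> (k + 2) mod P = 0 then
        (let j = (k + 2) div P in
         act (SOME b. b \<in> Ad (2 * j - 1) \<and> a * u i 1 - u (i + j) 0 * b \<in> F (2 * i + 2) D) x)
      else 0)"

definition KerLam :: "nat \<Rightarrow> (int \<Rightarrow> int \<Rightarrow> 'a) \<Rightarrow> ('a \<Rightarrow> 'm::zero \<Rightarrow> 'm) \<Rightarrow> (int \<Rightarrow> 'm set) \<Rightarrow> int \<Rightarrow> 'm set" where
  "KerLam p u act Md d = {y \<in> PhiM p Md d. lam p u act d y = 0}"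

definition ImLam :: "nat \<Rightarrow> (int \<Rightarrow> int \<Rightarrow> 'a) \<Rightarrow> ('a \<Rightarrow> 'm::zero \<Rightarrow> 'm) \<Rightarrow> (int \<Rightarrow> 'm set) \<Rightarrow> int \<Rightarrow> 'm set" where
  "ImLam p u act Md d = lam p u act d ` PhiM p Md d"

text \<open>Cokernel: elements of degree d are the cosets x + Im^d (x \<in> M^d).\<close>

definition coset :: "'m::ab_group_add set \<Rightarrow> 'm \<Rightarrow> 'm set" where
  "coset S x = (\<lambda>y. x + y) ` S"

definition CokerLam :: "nat \<Rightarrow> (int \<Rightarrow> int \<Rightarrow> 'a) \<Rightarrow> ('a \<Rightarrow> 'm::ab_group_add \<Rightarrow> 'm) \<Rightarrow> (int \<Rightarrow> 'm set) \<Rightarrow> int \<Rightarrow> 'm set set" where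
  "CokerLam p u act Md d = coset (ImLam p u act Md d) ` Md d"

definition coker_zero :: "nat \<Rightarrow> (int \<Rightarrow> int \<Rightarrow> 'a) \<Rightarrow> ('a \<Rightarrow> 'm::ab_group_add \<Rightarrow> 'm) \<Rightarrow> (int \<Rightarrow> 'm set) \<Rightarrow> int \<Rightarrow> 'm set" where
  "coker_zero p u act Md d = ImLam p u act Md d"

definition coker_act :: "nat \<Rightarrow> (int \<Rightarrow> int \<Rightarrow> 'a) \<Rightarrow> ('a \<Rightarrow> 'm::ab_group_add \<Rightarrow> 'm) \<Rightarrow> (int \<Rightarrow> 'm set) \<Rightarrow>
    int \<Rightarrow> int \<Rightarrow> 'a \<Rightarrow> 'm set \<Rightarrow> 'm set" where
  "coker_act p u act Md k d a C =
     coset (ImLam p u act Md (k + d)) (act a (SOME x. x \<in> Md d \<and> C = coset (ImLam p u act Md d) x))"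

end

theory Submission
  imports Defs
begin

text \<open>By (E6), a class in \<open>E\<^sub>n\<^sup>k A\<close> with \<open>n \<ge> 0\<close> can only be nonzero if
  \<open>n + k = 2pI + 2E\<close> with \<open>2I + E \<ge> n\<close>; surjectivity in (E8) then writes every \<open>a \<in> F\<^sub>n A\<close> as
  \<open>u\<^sub>I\<^sub>,\<^sub>E c\<close> modulo \<open>F\<^sub>n\<^sub>+\<^sub>1 A\<close>.  Cokernel: for \<open>x \<in> M\<^sup>n\<close> unstability gives
  \<open>a x = u\<^sub>I\<^sub>,\<^sub>E (c x) = \<lambda>(c x)\<close>.  Kernel: if \<open>y \<in> M\<^sup>2\<^sup>i\<^sup>+\<^sup>\<epsilon>\<close> has \<open>u\<^sub>i\<^sub>,\<^sub>\<epsilon> y = 0\<close> and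
  \<open>a \<in> F\<^sub>m A\<close> with \<open>m = 2pi + 2\<epsilon>\<close>, then \<open>c u\<^sub>i\<^sub>,\<^sub>\<epsilon>\<close> is a valid choice of the element \<open>b\<close> defining
  the action of \<open>a\<close> on \<open>y\<close>, and injectivity in (E8) makes every choice agree with it modulo
  \<open>F\<^sub>2\<^sub>i\<^sub>+\<^sub>\<epsilon>\<^sub>+\<^sub>1 A\<close>, so \<open>b y = c (u\<^sub>i\<^sub>,\<^sub>\<epsilon> y) = 0\<close> by unstability.\<close>

section \<open>Degree bookkeeping\<close>

lemma nonzero_class_degree_bound:
  fixes p i e k I E :: int
  assumes "2 \<le> p" "e \<in> {0, 1}" "E \<in> {0, 1}" "2 * i * (p - 1) + e \<le> k"
    and "2 * i + e + k = 2 * p * I + 2 * E"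
  shows "2 * i + e \<le> 2 * I + E"
proof -
  have bound: "e - E \<le> p * (I - i)"
    using assms(4,5) by (simp add: algebra_simps)
  have "i \<le> I"
  proof (rule ccontr)
    assume "\<not> i \<le> I"
    then have "p * (I - i) \<le> p * (- 1)"
      using assms(1) by (intro mult_left_mono) auto
    then show False
      using bound assms(1-3) by auto
  qed
  then show ?thesis
    using bound assms(2,3) by (cases "I = i") auto
qed

lemma phi_degree_decompose:
  assumes "0 < p" "phi_valid p m"
  shows "0 \<le> phi_i p m" "phi_e p m \<in> {0, 1}" "m = 2 * int p * phi_i p m + 2 * phi_e p m"
proof -
  have "m mod (2 * int p) \<in> {0, 2}" "0 \<le> m"
    using assms(2) unfolding phi_valid_def by auto
  then show "0 \<le> phi_i p m" "phi_e p m \<in> {0, 1}" "m = 2 * int p * phi_i p m + 2 * phi_e p m"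
    unfolding phi_i_def phi_e_def using assms(1) div_mult_mod_eq[of m "2 * int p"]
    by (auto simp: pos_imp_zdiv_nonneg_iff algebra_simps)
qed

lemma phi_degree_compose:
  assumes "2 \<le> p" "E \<in> {0, 1}"
  shows "phi_i p (2 * int p * I + 2 * E) = I" "phi_e p (2 * int p * I + 2 * E) = E"
  using assms unfolding phi_i_def phi_e_def by auto

lemma E6_nonzero_class_degree:
  assumes "E6 p F" "2 \<le> p" "0 \<le> n" "a \<in> F n k" "a \<notin> F (n + 1) k"
  shows "phi_valid p (n + k)" "n \<le> 2 * phi_i p (n + k) + phi_e p (n + k)"
proof -
  define i e where "i = n div 2" and "e = n mod 2"
  have n: "n = 2 * i + e" and e: "e \<in> {0, 1}" and "0 \<le> i"
    using assms(3) unfolding i_def e_def by auto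
  have "\<not> F (2 * i + e) k \<subseteq> F (2 * i + e + 1) k"
    using assms(4,5) n by auto
  then have "\<not> (k < 2 * i * (int p - 1) + e \<or> (2 * i + e + k) mod (2 * int p) \<notin> {0, 2})"
    using assms(1) e unfolding E6_def by blast
  then have k: "2 * i * (int p - 1) + e \<le> k" and "(n + k) mod (2 * int p) \<in> {0, 2}"
    using n by auto
  moreover have "0 \<le> 2 * i * (int p - 1)"
    using assms(2) \<open>0 \<le> i\<close> by simp
  then have "0 \<le> n + k"
    using k assms(3) e by auto
  ultimately show valid: "phi_valid p (n + k)"
    unfolding phi_valid_def by simp
  note phi = phi_degree_decompose[OF _ valid]
  show "n \<le> 2 * phi_i p (n + k) + phi_e p (n + k)"
    using nonzero_class_degree_bound[of "int p" e "phi_e p (n + k)" i k "phi_i p (n + k)"]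
      assms(2) e k phi n by (simp add: algebra_simps)
qed

lemma coset_of_member:
  fixes S :: "'m::ab_group_add set"
  assumes "0 \<in> S" "\<And>x y. x \<in> S \<Longrightarrow> y \<in> S \<Longrightarrow> x - y \<in> S" "y \<in> S"
  shows "coset S y = S"
proof -
  have "y + s \<in> S" if "s \<in> S" for s
    using assms(2)[OF assms(3) assms(2)[OF assms(1) that]] by simp
  moreover have "z = y + (z - y)" "z - y \<in> S" if "z \<in> S" for z
    using assms(2,3) that by auto
  ultimately show ?thesis
    unfolding coset_def by blast
qed

lemma phi_act_valid:
  assumes "phi_valid p m"
  defines "i \<equiv> phi_i p m" and "\<epsilon> \<equiv> phi_e p m" and "P \<equiv> 2 * int p"
  shows "phi_act p Ad F u act k m a y =
      (if 0 \<le> k \<and> k mod P = 0 then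
         act (SOME b. b \<in> Ad (2 * (k div P)) \<and>
           a * u i \<epsilon> - u (i + k div P) \<epsilon> * b \<in> F (2 * i + \<epsilon> + 1) (k + gdeg p i \<epsilon>)) y
       else if \<epsilon> = 0 \<and> 2 \<le> k \<and> (k - 2) mod P = 0 then
         act (SOME b. b \<in> Ad (2 * ((k - 2) div P) + 1) \<and>
           a * u i 0 - u (i + (k - 2) div P) 1 * b \<in> F (2 * i + 1) (k + gdeg p i \<epsilon>)) y
       else if \<epsilon> = 1 \<and> P \<le> k + 2 \<and> (k + 2) mod P = 0 then
         act (SOME b. b \<in> Ad (2 * ((k + 2) div P) - 1) \<and>
           a * u i 1 - u (i + (k + 2) div P) 0 * b \<in> F (2 * i + 2) (k + gdeg p i \<epsilon>)) y
       else 0)"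
  unfolding phi_act_def Let_def i_def \<epsilon>_def P_def using assms(1) by simp

lemma phi_act_cases:
  fixes p :: nat
  assumes "0 < p" "phi_valid p m"
  defines "i \<equiv> phi_i p m" and "\<epsilon> \<equiv> phi_e p m"
  obtains "phi_act p Ad F u act k m a y = 0"
  | I E j where "0 \<le> I" "E \<in> {0, 1}" "0 \<le> j" "2 * I + E - j = 2 * i + \<epsilon>"
    "m + k = 2 * int p * I + 2 * E"
    "phi_act p Ad F u act k m a y =
       act (SOME b. b \<in> Ad j \<and> a * u i \<epsilon> - u I E * b \<in> F (2 * i + \<epsilon> + 1) (k + gdeg p i \<epsilon>)) y"
proof -
  define P where "P = 2 * int p"
  have "0 < P"
    using assms(1) unfolding P_def by simp
  have m: "0 \<le> i" "\<epsilon> \<in> {0, 1}" "m = P * i + 2 * \<epsilon>"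
    using phi_degree_decompose[OF assms(1,2)] unfolding i_def \<epsilon>_def P_def by auto
  note phi_act = phi_act_valid[OF assms(2), where Ad = Ad and F = F and u = u and act = act
      and k = k and a = a and y = y, folded i_def \<epsilon>_def P_def]
  consider (even) "0 \<le> k" "k mod P = 0"
    | (up) "\<epsilon> = 0" "2 \<le> k" "(k - 2) mod P = 0" "\<not> (0 \<le> k \<and> k mod P = 0)"
    | (down) "\<epsilon> = 1" "P \<le> k + 2" "(k + 2) mod P = 0" "\<not> (0 \<le> k \<and> k mod P = 0)"
    | (none) "phi_act p Ad F u act k m a y = 0"
    using phi_act by (auto split: if_splits)
  then show thesis
  proof cases
    case even
    define j where "j = k div P"
    have "k = P * j" "0 \<le> j"
      using even \<open>0 < P\<close> unfolding j_def by (auto simp: pos_imp_zdiv_nonneg_iff)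
    then have "m + k = 2 * int p * (i + j) + 2 * \<epsilon>"
      using m(3) unfolding P_def by (simp add: algebra_simps)
    then show thesis
      using that(2)[of "i + j" \<epsilon> "2 * j"] m \<open>0 \<le> j\<close> phi_act even unfolding j_def by simp
  next
    case up
    define j where "j = (k - 2) div P"
    have "k - 2 = P * j" "0 \<le> j"
      using up \<open>0 < P\<close> unfolding j_def by (auto simp: pos_imp_zdiv_nonneg_iff)
    then have "m + k = 2 * int p * (i + j) + 2 * 1"
      using m(3) up(1) unfolding P_def by (simp add: algebra_simps)
    then show thesis
      using that(2)[of "i + j" 1 "2 * j + 1"] m \<open>0 \<le> j\<close> phi_act up unfolding j_def by simp
  next
    case down
    define j where "j = (k + 2) div P"
    have "k + 2 = P * j"
      using down unfolding j_def by auto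
    then have "1 \<le> j"
      using down \<open>0 < P\<close> by (metis mult.right_neutral mult_le_cancel_left_pos)
    have "m + k = 2 * int p * (i + j) + 2 * 0"
      using m(3) down(1) \<open>k + 2 = P * j\<close> unfolding P_def by (simp add: algebra_simps)
    have "phi_act p Ad F u act k m a y = act (SOME b. b \<in> Ad (2 * j - 1) \<and>
        a * u i 1 - u (i + j) 0 * b \<in> F (2 * i + 2) (k + gdeg p i \<epsilon>)) y"
      using phi_act down unfolding j_def by simp
    moreover have "2 * i + \<epsilon> + 1 = 2 * i + 2" "u i \<epsilon> = u i 1"
      using down(1) by simp_all
    ultimately have "phi_act p Ad F u act k m a y = act (SOME b. b \<in> Ad (2 * j - 1) \<and>
        a * u i \<epsilon> - u (i + j) 0 * b \<in> F (2 * i + \<epsilon> + 1) (k + gdeg p i \<epsilon>)) y"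
      by (simp only:)
    from that(2)[OF _ _ _ _ \<open>m + k = _\<close> this] show thesis
      using m(1) \<open>1 \<le> j\<close> down(1) by simp
  next
    case none
    then show thesis
      by (rule that(1))
  qed
qed

locale filtered_algebra =
  fixes sc :: "'k::field \<Rightarrow> 'a::ring_1 \<Rightarrow> 'a" and Ad :: "int \<Rightarrow> 'a set"
    and F :: "int \<Rightarrow> int \<Rightarrow> 'a set"
  assumes filtered_graded_algebra: "filtered_graded_algebra sc Ad F"
begin

lemma module_sc: "module sc"
  and F_subspace: "module.subspace sc (F i j)"
  and Ad_subspace: "module.subspace sc (Ad j)"
  and F_subset_Ad: "F i j \<subseteq> Ad j"
  and Ad_mult: "a \<in> Ad i \<Longrightarrow> b \<in> Ad j \<Longrightarrow> a * b \<in> Ad (i + j)"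
  and one_Ad: "1 \<in> Ad 0"
  using filtered_graded_algebra
  unfolding filtered_graded_algebra_def graded_vs_def module_iff_vector_space by auto

lemma F_diff: "x \<in> F i j \<Longrightarrow> y \<in> F i j \<Longrightarrow> x - y \<in> F i j"
  by (rule module.subspace_diff[OF module_sc F_subspace])

lemma Ad_diff: "x \<in> Ad j \<Longrightarrow> y \<in> Ad j \<Longrightarrow> x - y \<in> Ad j"
  by (rule module.subspace_diff[OF module_sc Ad_subspace])

lemma Ad_zero: "0 \<in> Ad j"
  by (rule module.subspace_0[OF module_sc Ad_subspace])

end

context
  fixes scA :: "'k::field \<Rightarrow> 'a::ring_1 \<Rightarrow> 'a" and scM :: "'k \<Rightarrow> 'm::ab_group_add \<Rightarrow> 'm"
    and Ad :: "int \<Rightarrow> 'a set" and Md :: "int \<Rightarrow> 'm set" and act :: "'a \<Rightarrow> 'm \<Rightarrow> 'm"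
  assumes graded_module: "graded_module scA scM Ad Md act"
begin

lemma graded_module_act_diff_right: "act a (x - y) = act a x - act a y"
  and graded_module_act_zero_right: "act a 0 = 0"
  and graded_module_act_diff_left: "act (a - b) x = act a x - act b x"
proof -
  interpret right: additive "act a"
    using graded_module unfolding graded_module_def by unfold_locales auto
  interpret left: additive "\<lambda>a. act a x"
    using graded_module unfolding graded_module_def by unfold_locales auto
  show "act a (x - y) = act a x - act a y" "act a 0 = 0" "act (a - b) x = act a x - act b x"
    by (fact right.diff right.zero left.diff)+
qed

lemma graded_module_act_mult: "act (a * b) x = act a (act b x)"
  and graded_module_act_one: "act 1 x = x"
  and graded_module_act_mem: "a \<in> Ad i \<Longrightarrow> x \<in> Md n \<Longrightarrow> act a x \<in> Md (i + n)"
  using graded_module unfolding graded_module_def by auto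

lemma graded_module_Md_diff: "x \<in> Md n \<Longrightarrow> y \<in> Md n \<Longrightarrow> x - y \<in> Md n"
  and graded_module_Md_zero: "0 \<in> Md n"
proof -
  have "module scM" "module.subspace scM (Md n)"
    using graded_module unfolding graded_module_def graded_vs_def module_iff_vector_space by auto
  then show "x \<in> Md n \<Longrightarrow> y \<in> Md n \<Longrightarrow> x - y \<in> Md n" "0 \<in> Md n"
    by (auto intro: module.subspace_diff module.subspace_0)
qed

lemma ImLam_zero: "0 \<in> ImLam p u act Md d"
proof -
  have "0 \<in> PhiM p Md d" "lam p u act d 0 = 0"
    unfolding PhiM_def lam_def by (auto simp: graded_module_Md_zero graded_module_act_zero_right)
  then show ?thesis
    unfolding ImLam_def by force
qed

lemma ImLam_diff:
  assumes "x \<in> ImLam p u act Md d" "y \<in> ImLam p u act Md d"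
  shows "x - y \<in> ImLam p u act Md d"
proof -
  obtain x' y' where "x' \<in> PhiM p Md d" "y' \<in> PhiM p Md d"
    and "x = lam p u act d x'" "y = lam p u act d y'"
    using assms unfolding ImLam_def by auto
  then have "x' - y' \<in> PhiM p Md d" "lam p u act d (x' - y') = x - y"
    unfolding PhiM_def lam_def
    by (auto simp: graded_module_Md_diff graded_module_act_diff_right split: if_splits)
  then show ?thesis
    unfolding ImLam_def by force
qed

lemma coker_act_eq_zero:
  assumes "C \<in> CokerLam p u act Md d"
    and "\<And>x. x \<in> Md d \<Longrightarrow> act a x \<in> ImLam p u act Md (k + d)"
  shows "coker_act p u act Md k d a C = coker_zero p u act Md (k + d)"
proof -
  let ?x = "SOME x. x \<in> Md d \<and> C = coset (ImLam p u act Md d) x"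
  have "\<exists>x. x \<in> Md d \<and> C = coset (ImLam p u act Md d) x"
    using assms(1) unfolding CokerLam_def by auto
  then have "?x \<in> Md d"
    by (rule someI2_ex) blast
  then show ?thesis
    unfolding coker_act_def coker_zero_def
    by (intro coset_of_member ImLam_zero ImLam_diff assms(2))
qed

end

locale unstable_module = filtered_algebra sc Ad F
  for sc :: "'k::field \<Rightarrow> 'a::ring_1 \<Rightarrow> 'a" and Ad F +
  fixes scM :: "'k \<Rightarrow> 'm::ab_group_add \<Rightarrow> 'm" and Md :: "int \<Rightarrow> 'm set"
    and act :: "'a \<Rightarrow> 'm \<Rightarrow> 'm"
  assumes graded_module: "graded_module sc scM Ad Md act"
    and unstable: "unstable F Md (\<lambda>_. 0) (\<lambda>k n. act)"
begin

lemmas act_diff_left = graded_module_act_diff_left[OF graded_module]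
  and act_zero_right = graded_module_act_zero_right[OF graded_module]
  and act_mult = graded_module_act_mult[OF graded_module]
  and act_mem = graded_module_act_mem[OF graded_module]

lemma act_F_eq_zero: "a \<in> F (n + 1) k \<Longrightarrow> x \<in> Md n \<Longrightarrow> act a x = 0"
  using unstable unfolding unstable_def by blast

lemma Md_negative_degree_zero:
  assumes "E1 Ad F" "x \<in> Md n" "n < 0"
  shows "x = 0"
proof -
  have "1 \<in> F (n + 1) 0"
    using assms(1,3) one_Ad unfolding E1_def by auto
  then show ?thesis
    using act_F_eq_zero[OF _ assms(2)] graded_module_act_one[OF graded_module] by metis
qed

end

section \<open>Factoring through the distinguished generators\<close>

locale generator_filtration = filtered_algebra sc Ad F
  for sc :: "'k::field \<Rightarrow> 'a::ring_1 \<Rightarrow> 'a" and Ad F +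
  fixes p :: nat and u :: "int \<Rightarrow> int \<Rightarrow> 'a"
  assumes p_ge_2: "2 \<le> p" and E6: "E6 p F" and E8: "E8 p Ad F"
    and gen_family: "gen_family p F u"
begin

lemma generator_F:
  assumes "0 \<le> I" "E \<in> {0, 1}"
  shows "u I E \<in> F (2 * I + E) (gdeg p I E)" "u I E \<notin> F (2 * I + E + 1) (gdeg p I E)"
  using gen_family assms unfolding gen_family_def by auto

lemma generator_mult_surj:
  assumes "0 \<le> I" "0 \<le> j" "E \<in> {0, 1}" "c \<in> F (2 * I - j + E) (gdeg p I E + j)"
  obtains b where "b \<in> Ad j" "c - u I E * b \<in> F (2 * I - j + E + 1) (gdeg p I E + j)"
  using E8[unfolded E8_def, rule_format, OF assms(1-3) generator_F[OF assms(1,3)]] assms(4) that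
  by blast

lemma generator_mult_inj:
  assumes "0 \<le> I" "0 \<le> j" "E \<in> {0, 1}" "b \<in> Ad j"
    and "u I E * b \<in> F (2 * I - j + E + 1) (gdeg p I E + j)"
  shows "b \<in> F (2 * I - j + E + 1) j"
  using E8[unfolded E8_def, rule_format, OF assms(1-3) generator_F[OF assms(1,3)]] assms(4,5)
  by blast

lemma factor_through_generator:
  assumes "0 \<le> n" "E \<in> {0, 1}" "n + k = 2 * int p * I + 2 * E" "a \<in> F n k"
  obtains c where "c \<in> Ad (2 * I + E - n)" "a - u I E * c \<in> F (n + 1) k"
proof (cases "a \<in> F (n + 1) k")
  case True
  then show ?thesis
    using that[of 0] Ad_zero by simp
next
  case False
  note phi = E6_nonzero_class_degree[OF E6 p_ge_2 assms(1,4) False]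
  have I: "phi_i p (n + k) = I" and E: "phi_e p (n + k) = E"
    using phi_degree_compose[OF p_ge_2 assms(2)] assms(3) by simp_all
  have "0 \<le> I"
    using phi_degree_decompose[OF _ phi(1)] p_ge_2 I by simp
  define j where "j = 2 * I + E - n"
  have "0 \<le> j"
    using phi(2) I E unfolding j_def by simp
  have "2 * I - j + E = n" "gdeg p I E + j = k"
    using assms(3) unfolding j_def gdeg_def by (simp_all add: algebra_simps)
  then obtain c where "c \<in> Ad j" "a - u I E * c \<in> F (n + 1) k"
    using generator_mult_surj[OF \<open>0 \<le> I\<close> \<open>0 \<le> j\<close> assms(2), of a] assms(4) by metis
  then show ?thesis
    using that unfolding j_def by blast
qed

lemma generator_lift:
  assumes "E4 Ad F" "0 \<le> i" "\<epsilon> \<in> {0, 1}" "E \<in> {0, 1}" "2 * I + E - j = 2 * i + \<epsilon>"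
    and "2 * int p * i + 2 * \<epsilon> + k = 2 * int p * I + 2 * E" "a \<in> F (2 * int p * i + 2 * \<epsilon>) k"
  obtains c where "c * u i \<epsilon> \<in> Ad j"
    "a * u i \<epsilon> - u I E * (c * u i \<epsilon>) \<in> F (2 * i + \<epsilon> + 1) (k + gdeg p i \<epsilon>)"
proof -
  define m where "m = 2 * int p * i + 2 * \<epsilon>"
  have "0 \<le> m"
    using assms(2,3) unfolding m_def by auto
  obtain c where c: "c \<in> Ad (2 * I + E - m)" "a - u I E * c \<in> F (m + 1) k"
    using factor_through_generator[OF \<open>0 \<le> m\<close> assms(4)] assms(6,7) unfolding m_def by blast
  have u: "u i \<epsilon> \<in> Ad (gdeg p i \<epsilon>)"
    using generator_F[OF assms(2,3)] F_subset_Ad by blast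
  have deg: "2 * I + E - m + gdeg p i \<epsilon> = j" "m + 1 - gdeg p i \<epsilon> = 2 * i + \<epsilon> + 1"
    using assms(5) unfolding m_def gdeg_def by (simp_all add: algebra_simps)
  have "c * u i \<epsilon> \<in> Ad j"
    using Ad_mult[OF c(1) u] unfolding deg .
  moreover have "(a - u I E * c) * u i \<epsilon> \<in> F (m + 1 - gdeg p i \<epsilon>) (k + gdeg p i \<epsilon>)"
    using assms(1) c(2) u unfolding E4_def by blast
  moreover have "(a - u I E * c) * u i \<epsilon> = a * u i \<epsilon> - u I E * (c * u i \<epsilon>)"
    by (simp add: algebra_simps)
  ultimately show thesis
    using that unfolding deg by simp
qed

lemma generator_lift_unique:
  assumes "0 \<le> I" "E \<in> {0, 1}" "0 \<le> j" "2 * I + E - j = 2 * i + \<epsilon>"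
    and "2 * int p * i + 2 * \<epsilon> + k = 2 * int p * I + 2 * E" "b \<in> Ad j" "w \<in> Ad j"
    and "a * u i \<epsilon> - u I E * b \<in> F (2 * i + \<epsilon> + 1) (k + gdeg p i \<epsilon>)"
    and "a * u i \<epsilon> - u I E * w \<in> F (2 * i + \<epsilon> + 1) (k + gdeg p i \<epsilon>)"
  shows "b - w \<in> F (2 * i + \<epsilon> + 1) j"
proof -
  have idx: "2 * I - j + E + 1 = 2 * i + \<epsilon> + 1" "gdeg p I E + j = k + gdeg p i \<epsilon>"
    using assms(4,5) unfolding gdeg_def by (simp_all add: algebra_simps)
  have "u I E * (b - w) = (a * u i \<epsilon> - u I E * w) - (a * u i \<epsilon> - u I E * b)"
    by (simp add: algebra_simps)
  also have "\<dots> \<in> F (2 * I - j + E + 1) (gdeg p I E + j)"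
    unfolding idx using F_diff assms(8,9) by blast
  finally show ?thesis
    using generator_mult_inj[OF assms(1,3,2) Ad_diff[OF assms(6,7)]] idx(1) by simp
qed

end

section \<open>Kernel and cokernel of \<open>\<lambda>\<close>\<close>

locale Phi_setting =
  unstable_module sc Ad F scM Md act + generator_filtration sc Ad F p u
  for sc :: "'k::field \<Rightarrow> 'a::ring_1 \<Rightarrow> 'a" and Ad F scM and Md :: "int \<Rightarrow> 'm::ab_group_add set"
    and act p u
begin

lemma act_mem_ImLam:
  assumes "E1 Ad F" "a \<in> F n k" "x \<in> Md n"
  shows "act a x \<in> ImLam p u act Md (k + n)"
proof (cases "n < 0 \<or> a \<in> F (n + 1) k")
  case True
  then have "act a x = 0"
    using Md_negative_degree_zero[OF assms(1,3)] act_F_eq_zero[OF _ assms(3)] act_zero_right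
    by auto
  then show ?thesis
    using ImLam_zero[OF graded_module] by simp
next
  case False
  then have "0 \<le> n" "a \<notin> F (n + 1) k"
    by auto
  note phi = E6_nonzero_class_degree[OF E6 p_ge_2 this(1) assms(2) this(2)]
  define I E where "I = phi_i p (n + k)" and "E = phi_e p (n + k)"
  have IE: "E \<in> {0, 1}" "n + k = 2 * int p * I + 2 * E"
    using phi_degree_decompose[OF _ phi(1)] p_ge_2 unfolding I_def E_def by auto
  obtain c where c: "c \<in> Ad (2 * I + E - n)" "a - u I E * c \<in> F (n + 1) k"
    using factor_through_generator[OF \<open>0 \<le> n\<close> IE assms(2)] .
  have "act a x = act (u I E) (act c x)"
    using act_F_eq_zero[OF c(2) assms(3)] act_diff_left act_mult by (metis eq_iff_diff_eq_0)
  moreover have "act c x \<in> Md (2 * I + E)"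
    using act_mem[OF c(1) assms(3)] by simp
  ultimately have "act c x \<in> PhiM p Md (k + n)" "lam p u act (k + n) (act c x) = act a x"
    using phi(1) unfolding PhiM_def lam_def I_def E_def by (simp_all add: add.commute)
  then show ?thesis
    unfolding ImLam_def by force
qed

lemma lift_annihilates_kernel:
  assumes "E4 Ad F"
    and "0 \<le> i" "\<epsilon> \<in> {0, 1}" "0 \<le> I" "E \<in> {0, 1}" "0 \<le> j" "2 * I + E - j = 2 * i + \<epsilon>"
    and "2 * int p * i + 2 * \<epsilon> + k = 2 * int p * I + 2 * E"
    and "a \<in> F (2 * int p * i + 2 * \<epsilon>) k" "y \<in> Md (2 * i + \<epsilon>)" "act (u i \<epsilon>) y = 0"
  shows "act (SOME b. b \<in> Ad j \<and> a * u i \<epsilon> - u I E * b \<in> F (2 * i + \<epsilon> + 1) (k + gdeg p i \<epsilon>)) y = 0"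
    (is "act (SOME b. ?lift b) y = 0")
proof -
  obtain c where "?lift (c * u i \<epsilon>)"
    using generator_lift[OF assms(1-3,5,7-9)] by blast
  define w b where "w = c * u i \<epsilon>" and "b = (SOME b. ?lift b)"
  have "?lift w"
    unfolding w_def by fact
  then have "?lift b"
    unfolding b_def by (rule someI)
  then have "b - w \<in> F (2 * i + \<epsilon> + 1) j"
    using generator_lift_unique[OF assms(4-8)] \<open>?lift w\<close> by blast
  then have "act (b - w) y = 0"
    using act_F_eq_zero assms(10) by blast
  moreover have "act w y = 0"
    using assms(11) act_mult act_zero_right unfolding w_def by simp
  moreover have "act b y = act (b - w) y + act w y"
    using act_diff_left[of b w y] by simp
  ultimately show ?thesis
    unfolding b_def by simp
qed

lemma phi_act_KerLam_zero:
  assumes "E4 Ad F" "a \<in> F m k" "y \<in> KerLam p u act Md m"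
  shows "phi_act p Ad F u act k m a y = 0"
proof (cases "phi_valid p m")
  case False
  then show ?thesis
    unfolding phi_act_def by simp
next
  case True
  define i \<epsilon> where "i = phi_i p m" and "\<epsilon> = phi_e p m"
  have p: "0 < p"
    using p_ge_2 by simp
  have m: "0 \<le> i" "\<epsilon> \<in> {0, 1}" "m = 2 * int p * i + 2 * \<epsilon>"
    using phi_degree_decompose[OF p True] unfolding i_def \<epsilon>_def by auto
  have y: "y \<in> Md (2 * i + \<epsilon>)" "act (u i \<epsilon>) y = 0"
    using assms(3) True unfolding KerLam_def PhiM_def lam_def i_def \<epsilon>_def by auto
  from phi_act_cases[OF p True, where Ad = Ad and F = F and u = u and act = act and k = k
      and a = a and y = y] show ?thesis
  proof cases
    case 1
    then show ?thesis .
  next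
    case (2 I E j)
    then have "2 * I + E - j = 2 * i + \<epsilon>" "2 * int p * i + 2 * \<epsilon> + k = 2 * int p * I + 2 * E"
      using m(3) unfolding i_def \<epsilon>_def by simp_all
    then show ?thesis
      using 2(6) lift_annihilates_kernel[OF assms(1) m(1,2) 2(1-3) _ _ _ y] assms(2) m(3)
      unfolding i_def \<epsilon>_def by simp
  qed
qed

end

theorem lemma3p8:
  fixes scK :: "'k::field \<Rightarrow> 'a::ring_1 \<Rightarrow> 'a"
    and scM :: "'k \<Rightarrow> 'm::ab_group_add \<Rightarrow> 'm"
    and p :: nat
    and Ad :: "int \<Rightarrow> 'a set"
    and F :: "int \<Rightarrow> int \<Rightarrow> 'a set"
    and Md :: "int \<Rightarrow> 'm set"
    and act :: "'a \<Rightarrow> 'm \<Rightarrow> 'm"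
    and u :: "int \<Rightarrow> int \<Rightarrow> 'a"
  assumes char: "prime p" "of_nat p = (0::'k)"
    and alg: "filtered_graded_algebra scK Ad F"
    and "E1 Ad F" and "E2 F" and "E3 Ad F" and "E4 Ad F"
    and "E6 p F" and "E7 scK p F" and "E8 p Ad F"
    and modM: "graded_module scK scM Ad Md act"
    and unstM: "unstable F Md (\<lambda>_. 0) (\<lambda>k n. act)"
    and gen: "gen_family p F u"
  shows "unstable F (desusp_sp (CokerLam p u act Md)) (desusp_zero (coker_zero p u act Md))
           (desusp_act (coker_act p u act Md)) \<and>
         (E9 p Ad F \<longrightarrow>
         unstable F (desusp_sp (KerLam p u act Md)) (\<lambda>_. 0)
           (desusp_act (phi_act p Ad F u act)))"
proof -
  interpret Phi_setting scK Ad F scM Md act p u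
    using alg modM unstM gen \<open>E6 p F\<close> \<open>E8 p Ad F\<close> prime_ge_2_nat[OF char(1)]
    by unfold_locales
  have "coker_act p u act Md k (n + 1) a C = coker_zero p u act Md (k + n + 1)"
    if "a \<in> F (n + 1) k" "C \<in> CokerLam p u act Md (n + 1)" for n k a C
    using coker_act_eq_zero[OF graded_module that(2) act_mem_ImLam[OF \<open>E1 Ad F\<close> that(1)]]
    by (simp add: add.assoc)
  moreover have "phi_act p Ad F u act k (n + 1) a y = 0"
    if "a \<in> F (n + 1) k" "y \<in> KerLam p u act Md (n + 1)" for n k a y
    using phi_act_KerLam_zero[OF \<open>E4 Ad F\<close> that] .
  ultimately show ?thesis
    unfolding unstable_def desusp_sp_def desusp_zero_def desusp_act_def by (simp add: add.assoc)
qed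

end
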